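(* Let $d\in D^\times$ with $\rho(d)=d$, and let $F'\subseteq D$ be a subfield containing $F$, fixed pointwise by $\rho$, such that $F[d]|F$ and $F'|F$ are $F$-isomorphic. Then there is $g\in D^\times$ with $gF[d]\rho(g)=F'$. Moreover, if $d\notin F$, every $g\in D^\times$ with $gF[d]g^{-1}=F'$ satisfies $gF[d]\rho(g)=F'$.
   Context: $F$ is a non-archimedean local field of odd residue characteristic. $D$ is a non-split quaternion division algebra with centre $F$, and $\rho$ is an orthogonal anti-involution of $D$ (an $F$-linear involutive anti-automorphism with $3$-dimensional fixed space). *)

theory Defs
  imports Main
begin

text \<open>The quaternion division algebra D is modelled as a type of class division_ring;
  its centre F is identified with the subset center of D.\<close>

definition center :: "'a::ring_1 set" where
  "center = {c. \<forall>x. c * x = x * c}"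

definition lin_comb :: "'a::ring_1 list \<Rightarrow> 'a list \<Rightarrow> 'a" where
  "lin_comb cs bs = sum_list (map2 (*) cs bs)"

definition lin_indep_over :: "'a::ring_1 set \<Rightarrow> 'a list \<Rightarrow> bool" where
  "lin_indep_over K bs \<longleftrightarrow>
     (\<forall>cs. length cs = length bs \<and> set cs \<subseteq> K \<and> lin_comb cs bs = 0 \<longrightarrow> set cs \<subseteq> {0})"

definition span_over :: "'a::ring_1 set \<Rightarrow> 'a list \<Rightarrow> 'a set" where
  "span_over K bs = {lin_comb cs bs | cs. length cs = length bs \<and> set cs \<subseteq> K}"

definition has_dim_over :: "'a::ring_1 set \<Rightarrow> 'a set \<Rightarrow> nat \<Rightarrow> bool" where
  "has_dim_over K V n \<longleftrightarrow>
     (\<exists>bs. length bs = n \<and> set bs \<subseteq> V \<and> lin_indep_over K bs \<and> span_over K bs = V)"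

definition val_ge :: "('a::ring_1 \<Rightarrow> int) \<Rightarrow> 'a \<Rightarrow> int \<Rightarrow> bool" where
  "val_ge v x N \<longleftrightarrow> x = 0 \<or> v x \<ge> N"

definition discrete_valuation :: "'a::ring_1 set \<Rightarrow> ('a \<Rightarrow> int) \<Rightarrow> bool" where
  "discrete_valuation K v \<longleftrightarrow>
     (\<forall>x\<in>K. \<forall>y\<in>K. x \<noteq> 0 \<and> y \<noteq> 0 \<longrightarrow> v (x * y) = v x + v y) \<and>
     (\<forall>x\<in>K. \<forall>y\<in>K. x \<noteq> 0 \<and> y \<noteq> 0 \<and> x + y \<noteq> 0 \<longrightarrow> v (x + y) \<ge> min (v x) (v y)) \<and>
     (\<exists>\<pi>\<in>K. \<pi> \<noteq> 0 \<and> v \<pi> = 1)"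

definition val_complete_field :: "'a::ring_1 set \<Rightarrow> ('a \<Rightarrow> int) \<Rightarrow> bool" where
  "val_complete_field K v \<longleftrightarrow>
     (\<forall>X::nat \<Rightarrow> 'a. (\<forall>n. X n \<in> K) \<and> (\<forall>N. \<exists>M. \<forall>m\<ge>M. \<forall>n\<ge>M. val_ge v (X m - X n) N) \<longrightarrow>
        (\<exists>L\<in>K. \<forall>N. \<exists>M. \<forall>n\<ge>M. val_ge v (X n - L) N))"

definition finite_residue_field :: "'a::ring_1 set \<Rightarrow> ('a \<Rightarrow> int) \<Rightarrow> bool" where
  "finite_residue_field K v \<longleftrightarrow>
     (\<exists>R. finite R \<and> R \<subseteq> K \<and> (\<forall>x\<in>K. val_ge v x 0 \<longrightarrow> (\<exists>r\<in>R. val_ge v (x - r) 1)))"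

text \<open>Residue characteristic odd iff 2 is a unit of the valuation ring.\<close>
definition odd_residue_char :: "('a::ring_1 \<Rightarrow> int) \<Rightarrow> bool" where
  "odd_residue_char v \<longleftrightarrow> (2::'a) \<noteq> 0 \<and> v 2 = 0"

definition nonarch_local_field_odd :: "'a::ring_1 set \<Rightarrow> bool" where
  "nonarch_local_field_odd K \<longleftrightarrow>
     (\<exists>v. discrete_valuation K v \<and> val_complete_field K v \<and> finite_residue_field K v \<and> odd_residue_char v)"

definition orthogonal_anti_involution :: "('a::ring_1 \<Rightarrow> 'a) \<Rightarrow> bool" where
  "orthogonal_anti_involution \<rho> \<longleftrightarrow>
     (\<forall>x y. \<rho> (x + y) = \<rho> x + \<rho> y) \<and>
     (\<forall>c\<in>center. \<forall>x. \<rho> (c * x) = c * \<rho> x) \<and>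
     (\<forall>x y. \<rho> (x * y) = \<rho> y * \<rho> x) \<and>
     (\<forall>x. \<rho> (\<rho> x) = x) \<and>
     has_dim_over center {x. \<rho> x = x} 3"

definition adjoin :: "'a::ring_1 set \<Rightarrow> 'a \<Rightarrow> 'a set" where
  "adjoin K d = {\<Sum>i<n. c i * d ^ i | c n. \<forall>i<n. c i \<in> K}"

definition is_subfield :: "'a::division_ring set \<Rightarrow> bool" where
  "is_subfield L \<longleftrightarrow> 0 \<in> L \<and> 1 \<in> L \<and>
     (\<forall>x\<in>L. \<forall>y\<in>L. x + y \<in> L \<and> x * y \<in> L \<and> x * y = y * x) \<and>
     (\<forall>x\<in>L. - x \<in> L \<and> inverse x \<in> L)"

definition K_isomorphic :: "'a::ring_1 set \<Rightarrow> 'a set \<Rightarrow> 'a set \<Rightarrow> bool" where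
  "K_isomorphic K A B \<longleftrightarrow>
     (\<exists>\<phi>. bij_betw \<phi> A B \<and>
       (\<forall>x\<in>A. \<forall>y\<in>A. \<phi> (x + y) = \<phi> x + \<phi> y \<and> \<phi> (x * y) = \<phi> x * \<phi> y) \<and>
       \<phi> 1 = 1 \<and> (\<forall>c\<in>K. \<phi> c = c))"

end

theory Submission
  imports Defs "HOL-Algebra.Algebraic_Closure_Type"
begin

text \<open>
  If \<open>d\<close> is central then \<open>F[d] = F = F'\<close> and \<open>g = 1\<close> works. Otherwise the centraliser of \<open>d\<close>
  in the 4-dimensional algebra \<open>D\<close> is the quadratic field \<open>F[d] = F + F d\<close>, so an
  \<open>F\<close>-isomorphism \<open>F[d] \<cong> F'\<close> sends \<open>d\<close> to a root \<open>d'\<close> of the minimal polynomial of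
  \<open>d\<close>, and an explicit Skolem-Noether argument gives \<open>g \<noteq> 0\<close> with \<open>g d g\<^sup>-\<^sup>1 = d'\<close>, i.e.\
  \<open>g F[d] g\<^sup>-\<^sup>1 = F'\<close>. For any such \<open>g\<close>, applying \<open>\<rho>\<close> to the \<open>\<rho>\<close>-fixed element
  \<open>g d g\<^sup>-\<^sup>1\<close> shows that \<open>\<rho>(g) g\<close> commutes with \<open>d\<close>, hence lies in \<open>F[d]\<close>; so
  \<open>n = g \<rho>(g) = g (\<rho>(g) g) g\<^sup>-\<^sup>1\<close> lies in \<open>F'\<close> and \<open>g F[d] \<rho>(g) = (g F[d] g\<^sup>-\<^sup>1) n = F'\<close>.
\<close>

subsection \<open>Centralisers\<close>

definition centralizer :: "'a::ring_1 set \<Rightarrow> 'a set" where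
  "centralizer S = {z. \<forall>y\<in>S. z * y = y * z}"

lemma center_eq_centralizer_UNIV: "center = centralizer UNIV"
  by (simp add: center_def centralizer_def)

lemma centralizer_singleton_iff [simp]: "z \<in> centralizer {d} \<longleftrightarrow> z * d = d * z"
  by (simp add: centralizer_def)

lemma centralizer_antimono: "S \<subseteq> T \<Longrightarrow> centralizer T \<subseteq> centralizer S"
  by (auto simp: centralizer_def)

lemma center_subset_centralizer: "center \<subseteq> centralizer S"
  unfolding center_eq_centralizer_UNIV by (rule centralizer_antimono) simp

lemma one_in_centralizer: "1 \<in> centralizer S"
  by (simp add: centralizer_def)

lemma add_in_centralizer: "x \<in> centralizer S \<Longrightarrow> y \<in> centralizer S \<Longrightarrow> x + y \<in> centralizer S"
  by (simp add: centralizer_def distrib_left distrib_right)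

lemma mult_in_centralizer: "x \<in> centralizer S \<Longrightarrow> y \<in> centralizer S \<Longrightarrow> x * y \<in> centralizer S"
  by (simp add: centralizer_def) (metis mult.assoc)

lemma uminus_in_centralizer: "x \<in> centralizer S \<Longrightarrow> - x \<in> centralizer S"
  by (simp add: centralizer_def)

lemma inverse_in_centralizer:
  fixes x :: "'a::division_ring"
  assumes "x \<in> centralizer S"
  shows "inverse x \<in> centralizer S"
proof (cases "x = 0")
  case False
  have "inverse x * y = y * inverse x" if "y \<in> S" for y
  proof -
    have "inverse x * y = inverse x * (y * x) * inverse x"
      using False by (simp add: mult.assoc)
    also have "\<dots> = inverse x * (x * y) * inverse x"
      using assms that by (simp add: centralizer_def)
    also have "\<dots> = y * inverse x"
      using False by (simp add: mult.assoc[symmetric])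
    finally show ?thesis .
  qed
  then show ?thesis by (simp add: centralizer_def)
qed (simp add: centralizer_def)

lemma power_in_centralizer: "x \<in> centralizer S \<Longrightarrow> x ^ n \<in> centralizer S"
  by (induct n) (simp_all add: one_in_centralizer mult_in_centralizer)

lemma sum_in_centralizer: "(\<And>i. i \<in> I \<Longrightarrow> f i \<in> centralizer S) \<Longrightarrow> sum f I \<in> centralizer S"
  by (simp add: centralizer_def sum_distrib_left sum_distrib_right)

lemmas centralizer_closed =
  one_in_centralizer add_in_centralizer mult_in_centralizer uminus_in_centralizer

lemma subset_double_centralizer: "S \<subseteq> centralizer (centralizer S)"
  by (auto simp: centralizer_def)

lemma double_centralizer_subset:
  "S \<subseteq> centralizer S \<Longrightarrow> centralizer (centralizer S) \<subseteq> centralizer S"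
  by (auto simp: centralizer_def)

lemma double_centralizer_commute:
  assumes "S \<subseteq> centralizer S" "x \<in> centralizer (centralizer S)" "y \<in> centralizer (centralizer S)"
  shows "x * y = y * x"
proof -
  have "y \<in> centralizer S"
    using assms(3) double_centralizer_subset[OF assms(1)] by blast
  then show ?thesis
    using assms(2) by (simp add: centralizer_def)
qed

lemma subset_adjoin: "K \<subseteq> adjoin K d"
proof
  fix c assume "c \<in> K"
  then show "c \<in> adjoin K d"
    unfolding adjoin_def by (auto intro!: exI[of _ "\<lambda>_. c"] exI[of _ 1])
qed

lemma linear_in_adjoin:
  assumes "a \<in> K" "b \<in> K"
  shows "a * d + b \<in> adjoin K d"
proof -
  define c where "c = (\<lambda>i::nat. if i = 0 then b else a)"
  have "a * d + b = (\<Sum>i<2. c i * d ^ i)" and "\<forall>i<2. c i \<in> K"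
    using assms by (simp_all add: c_def numeral_2_eq_2)
  then show ?thesis
    unfolding adjoin_def by blast
qed

lemma adjoin_subset_double_centralizer:
  fixes d :: "'a::ring_1"
  assumes "K \<subseteq> center"
  shows "adjoin K d \<subseteq> centralizer (centralizer {d})"
proof
  fix x assume "x \<in> adjoin K d"
  then obtain c n where x: "x = (\<Sum>i<n. c i * d ^ i)" and c: "\<forall>i<n. c i \<in> K"
    unfolding adjoin_def by blast
  have "d \<in> centralizer (centralizer {d})"
    using subset_double_centralizer by blast
  then show "x \<in> centralizer (centralizer {d})"
    unfolding x using c assms center_subset_centralizer
    by (auto intro!: sum_in_centralizer mult_in_centralizer power_in_centralizer)
qed

lemma adjoin_center_of_central:
  assumes "d \<in> center"
  shows "adjoin center d = center"
proof -
  have "centralizer {d} = UNIV"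
    using assms by (auto simp: center_def)
  then show ?thesis
    using adjoin_subset_double_centralizer[of center d] subset_adjoin[of center d]
    by (simp add: center_eq_centralizer_UNIV)
qed

subsection \<open>Dimension theory inside a ring\<close>

lemma ring_of_type_algebra_ring: "ring (ring_of_type_algebra :: 'a::ring_1 ring)"
proof -
  have "\<exists>y. x + y = 0" for x :: 'a
    using add.right_inverse by blast
  then show ?thesis
    unfolding ring_of_type_algebra_def
    by unfold_locales (auto simp: algebra_simps Units_def)
qed

lemma ring_of_type_algebra_simps [simp]:
  "carrier ring_of_type_algebra = UNIV"
  "x \<otimes>\<^bsub>ring_of_type_algebra\<^esub> y = x * y"
  "x \<oplus>\<^bsub>ring_of_type_algebra\<^esub> y = x + y"
  "\<one>\<^bsub>ring_of_type_algebra\<^esub> = 1"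
  "\<zero>\<^bsub>ring_of_type_algebra\<^esub> = 0"
  by (simp_all add: ring_of_type_algebra_def)

lemma ring_of_type_algebra_a_inv [simp]: "\<ominus>\<^bsub>ring_of_type_algebra\<^esub> x = - (x::'a::ring_1)"
  using abelian_group.minus_equality[OF ring.is_abelian_group[OF ring_of_type_algebra_ring],
      of "- x" x]
  by simp

interpretation D: ring "ring_of_type_algebra :: 'a::ring_1 ring"
  rewrites "carrier (ring_of_type_algebra :: 'a ring) = UNIV"
    and "monoid.mult (ring_of_type_algebra :: 'a ring) = (*)"
    and "ring.add (ring_of_type_algebra :: 'a ring) = (+)"
    and "monoid.one (ring_of_type_algebra :: 'a ring) = 1"
    and "ring.zero (ring_of_type_algebra :: 'a ring) = 0"
    and "a_inv (ring_of_type_algebra :: 'a ring) = uminus"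
  by (simp_all add: ring_of_type_algebra_ring fun_eq_iff)

lemma subring_of_type_algebraI:
  fixes H :: "'a::ring_1 set"
  assumes "1 \<in> H" "\<And>x y. x \<in> H \<Longrightarrow> y \<in> H \<Longrightarrow> x + y \<in> H"
    "\<And>x y. x \<in> H \<Longrightarrow> y \<in> H \<Longrightarrow> x * y \<in> H" "\<And>x. x \<in> H \<Longrightarrow> - x \<in> H"
  shows "subring H ring_of_type_algebra"
  by (rule D.subringI) (use assms in auto)

lemma subfield_of_type_algebraI:
  fixes H :: "'a::division_ring set"
  assumes "1 \<in> H" "\<And>x y. x \<in> H \<Longrightarrow> y \<in> H \<Longrightarrow> x + y \<in> H"
    "\<And>x y. x \<in> H \<Longrightarrow> y \<in> H \<Longrightarrow> x * y \<in> H" "\<And>x. x \<in> H \<Longrightarrow> - x \<in> H"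
    "\<And>x. x \<in> H \<Longrightarrow> inverse x \<in> H" "\<And>x y. x \<in> H \<Longrightarrow> y \<in> H \<Longrightarrow> x * y = y * x"
  shows "subfield H ring_of_type_algebra"
proof (rule D.subfieldI)
  show "subcring H ring_of_type_algebra"
    by (rule D.subcringI[OF subring_of_type_algebraI]) (use assms in auto)
  show "Units (ring_of_type_algebra\<lparr>carrier := H\<rparr>) = H - {0}"
    using assms(5) by (auto simp: Units_def intro!: bexI[of _ "inverse x" for x])
qed

lemma subalgebra_of_type_algebraI:
  fixes V :: "'a::ring_1 set"
  assumes "subring V ring_of_type_algebra" "\<And>k v. k \<in> K \<Longrightarrow> v \<in> V \<Longrightarrow> k * v \<in> V"
  shows "subalgebra K V ring_of_type_algebra"
  using subalgebra.intro[OF subring.axioms(1)[OF assms(1)]] assms(2)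
  unfolding subalgebra_axioms_def by simp

lemma subring_centralizer: "subring (centralizer S) (ring_of_type_algebra :: 'a::ring_1 ring)"
  by (rule subring_of_type_algebraI) (simp_all add: centralizer_closed)

lemma subfield_double_centralizer:
  fixes S :: "'a::division_ring set"
  assumes "S \<subseteq> centralizer S"
  shows "subfield (centralizer (centralizer S)) ring_of_type_algebra"
proof (rule subfield_of_type_algebraI)
  show "x * y = y * x" if "x \<in> centralizer (centralizer S)" "y \<in> centralizer (centralizer S)" for x y
    using double_centralizer_commute[OF assms that] .
qed (simp_all add: centralizer_closed inverse_in_centralizer)

lemma subfield_center: "subfield center (ring_of_type_algebra :: 'a::division_ring ring)"
  unfolding center_eq_centralizer_UNIV
proof (rule subfield_of_type_algebraI)
  show "x * y = y * x" if "x \<in> centralizer UNIV" for x y :: 'a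
    using that unfolding centralizer_def by blast
qed (simp_all add: centralizer_closed inverse_in_centralizer)

lemma lin_comb_eq_combine: "lin_comb cs bs = D.combine cs bs"
  by (induct cs arbitrary: bs; case_tac bs; simp add: lin_comb_def)

lemma has_dim_over_imp_dimension:
  fixes K :: "'a::ring_1 set"
  assumes K: "subfield K ring_of_type_algebra" and "has_dim_over K V n"
  shows "D.dimension n K V"
proof -
  obtain bs where bs: "length bs = n" "lin_indep_over K bs" "span_over K bs = V"
    using assms(2) unfolding has_dim_over_def by auto
  have span: "D.Span K bs = V"
    using D.Span_eq_combine_set_length_version[OF K, of bs] bs(3)
    unfolding span_over_def lin_comb_eq_combine by simp
  have indep: "D.independent K bs"
  proof (rule D.trivial_combine_imp_independent[OF K])
    fix Ks assume Ks: "set Ks \<subseteq> K" "D.combine Ks bs = 0"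
    define cs where "cs = take (length bs) Ks @ replicate (length bs - length Ks) 0"
    have "D.combine cs bs = D.combine Ks bs"
      using D.combine_append_replicate[of bs "take (length bs) Ks"] D.combine_take
      by (simp add: cs_def)
    moreover have "length cs = length bs" "set cs \<subseteq> K"
      using Ks(1) set_take_subset[of "length bs" Ks] subringE(2)[OF subfieldE(1)[OF K]]
      by (auto simp: cs_def)
    ultimately have "set cs \<subseteq> {0}"
      using bs(2) Ks(2) unfolding lin_indep_over_def lin_comb_eq_combine by simp
    then show "set (take (length bs) Ks) \<subseteq> {0}"
      by (simp add: cs_def)
  qed simp
  show ?thesis
    using D.dimensionI[OF K indep span] bs(1) by simp
qed

lemma dimension_eq_UNIV:
  fixes K :: "'a::ring_1 set"
  assumes K: "subfield K ring_of_type_algebra"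
    and "D.dimension n K UNIV" "D.dimension n K E"
  shows "E = UNIV"
proof -
  obtain Vs where Vs: "D.independent K Vs" "length Vs = n" "D.Span K Vs = E"
    using D.exists_base[OF K assms(3)] by blast
  then show ?thesis
    using D.independent_length_eq_dimension[OF K assms(2) Vs(1)] by simp
qed

lemma subalgebra_dimension_le:
  fixes K :: "'a::ring_1 set"
  assumes K: "subfield K ring_of_type_algebra"
    and "D.dimension n K UNIV" "subalgebra K E ring_of_type_algebra"
  obtains m where "m \<le> n" "D.dimension m K E"
proof -
  obtain m where m: "D.dimension m K E"
    using D.subalbegra_incl_imp_finite_dimension[OF K D.finite_dimensionI[OF assms(2)] assms(3)]
    by (rule D.finite_dimensionE') simp
  obtain Vs where Vs: "D.independent K Vs" "length Vs = m"
    using D.exists_base[OF K m] by blast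
  have "m \<le> n"
    using D.independent_length_le_dimension[OF K assms(2) Vs(1)] Vs(2) by simp
  then show ?thesis
    using that m by blast
qed

lemma dimension_dvd_of_subfield:
  fixes K L :: "'a::ring_1 set"
  assumes K: "subfield K ring_of_type_algebra" and L: "subfield L ring_of_type_algebra"
    and "K \<subseteq> L" "D.dimension k K L" "D.dimension n K E" "subalgebra L E ring_of_type_algebra"
  shows "k dvd n"
proof -
  obtain Vs where Vs: "D.independent K Vs" "D.Span K Vs = E"
    using D.exists_base[OF K assms(5)] by blast
  have "set Vs \<subseteq> E"
    using D.Span_base_incl[OF K] Vs(2) by auto
  then have "D.Span L Vs \<subseteq> E"
    by (rule D.subalgebra_Span_incl[OF L assms(6)])
  moreover have "E \<subseteq> D.Span L Vs"
    using D.Span_eq_combine_set[OF K] D.Span_eq_combine_set[OF L] Vs(2) assms(3) by blast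
  ultimately have "D.finite_dimension L E"
    using D.Span_finite_dimension[OF L, of Vs] by simp
  then obtain m where "D.dimension m L E"
    by (rule D.finite_dimensionE')
  then have "D.dimension (k * m) K E"
    by (rule D.telescopic_base[OF K L assms(4)])
  then show ?thesis
    using D.dimension_is_inj[OF K assms(5)] by simp
qed

lemma Span_linear_pair:
  fixes K :: "'a::ring_1 set"
  assumes K: "subfield K ring_of_type_algebra"
  shows "D.Span K [d, 1] = {a * d + b | a b. a \<in> K \<and> b \<in> K}"
proof -
  have "x \<in> D.Span K [d, 1] \<longleftrightarrow> (\<exists>a b. a \<in> K \<and> b \<in> K \<and> x = a * d + b)" for x
  proof -
    have "x \<in> D.Span K [d, 1] \<longleftrightarrow>
        (\<exists>Ks. set Ks \<subseteq> K \<and> length Ks = length [d, 1] \<and> x = D.combine Ks [d, 1])"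
      by (rule D.Span_mem_iff_length_version[OF K]) simp
    also have "\<dots> \<longleftrightarrow> (\<exists>a b. a \<in> K \<and> b \<in> K \<and> x = a * d + b)"
    proof
      assume "\<exists>Ks. set Ks \<subseteq> K \<and> length Ks = length [d, 1] \<and> x = D.combine Ks [d, 1]"
      then show "\<exists>a b. a \<in> K \<and> b \<in> K \<and> x = a * d + b"
        by (auto simp: length_Suc_conv)
    next
      assume "\<exists>a b. a \<in> K \<and> b \<in> K \<and> x = a * d + b"
      then obtain a b where "a \<in> K" "b \<in> K" "x = a * d + b"
        by blast
      then show "\<exists>Ks. set Ks \<subseteq> K \<and> length Ks = length [d, 1] \<and> x = D.combine Ks [d, 1]"
        by (intro exI[of _ "[a, b]"]) simp
    qed
    finally show ?thesis .
  qed
  then show ?thesis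
    by blast
qed

lemma independent_linear_pair:
  fixes K :: "'a::ring_1 set"
  assumes K: "subfield K ring_of_type_algebra" and "d \<notin> K"
  shows "D.independent K [d, 1]"
proof -
  have "1 \<notin> D.Span K []"
    by simp
  then have "D.independent K [1]"
    using D.li_Cons[of 1 K "[]"] by simp
  moreover have "d \<notin> D.Span K [1]"
    using D.Span_mem_iff_length_version[OF K, of "[1]" d] assms(2) by (auto simp: length_Suc_conv)
  ultimately show ?thesis
    using D.li_Cons[of d K "[1]"] by simp
qed

subsection \<open>Centraliser of a non-central element of a quaternion algebra\<close>

text \<open>The double centraliser \<open>Z\<close> of \<open>d\<close> is a field with \<open>F \<subset> Z \<subset> D\<close>, so \<open>[Z:F]\<close> is a
  proper divisor of 4 and at least 2, i.e.\ 2. The centraliser \<open>C\<close> of \<open>d\<close> is a \<open>Z\<close>-space, so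
  \<open>[C:F]\<close> is even, and \<open>C \<noteq> D\<close> forces \<open>[C:F] = 2\<close>; hence \<open>C = F + F d\<close>.\<close>
lemma centralizer_of_noncentral:
  fixes d :: "'a::division_ring"
  assumes "has_dim_over (center :: 'a set) UNIV 4" and "d \<notin> center"
  shows "centralizer {d} = {a * d + b | a b. a \<in> center \<and> b \<in> center}"
proof -
  define C where "C = centralizer {d}"
  define Z where "Z = centralizer C"
  have F: "subfield (center :: 'a set) ring_of_type_algebra"
    by (rule subfield_center)
  have dimD: "D.dimension 4 center (UNIV :: 'a set)"
    by (rule has_dim_over_imp_dimension[OF F assms(1)])
  have Z: "subfield Z ring_of_type_algebra"
    unfolding Z_def C_def by (rule subfield_double_centralizer) simp
  have FZ: "center \<subseteq> Z"
    unfolding Z_def center_eq_centralizer_UNIV by (rule centralizer_antimono) simp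
  have ZC: "Z \<subseteq> C"
    unfolding Z_def C_def by (rule double_centralizer_subset) simp
  have dZ: "d \<in> Z"
    using subset_double_centralizer[of "{d}"] unfolding Z_def C_def by blast
  have dC: "set [d, 1] \<subseteq> C"
    by (simp add: C_def)
  have ind: "D.independent center [d, 1]"
    by (rule independent_linear_pair[OF F assms(2)])
  have proper: "E \<noteq> UNIV" if "E \<subseteq> C" for E
  proof
    assume "E = UNIV"
    then have "y \<in> centralizer {d}" for y
      using that unfolding C_def by blast
    then have "d \<in> centralizer UNIV"
      by (simp add: centralizer_def)
    with assms(2) show False
      by (simp add: center_eq_centralizer_UNIV)
  qed
  have subalgebra_C: "subalgebra L C ring_of_type_algebra" if "L \<subseteq> C" for L
    unfolding C_def by (rule subalgebra_of_type_algebraI[OF subring_centralizer])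
      (use that mult_in_centralizer in \<open>auto simp only: C_def\<close>)
  have "subalgebra center Z ring_of_type_algebra"
    by (rule subalgebra_of_type_algebraI[OF subfieldE(1)[OF Z]])
      (use FZ subringE(6)[OF subfieldE(1)[OF Z]] in auto)
  then obtain k where "k \<le> 4" and dimZ: "D.dimension k center Z"
    by (rule subalgebra_dimension_le[OF F dimD])
  moreover have "k dvd 4"
    using dimension_dvd_of_subfield[OF F Z FZ dimZ dimD] D.carrier_is_subalgebra[of Z] by simp
  moreover have "2 \<le> k"
    using D.independent_length_le_dimension[OF F dimZ ind] dZ subringE(3)[OF subfieldE(1)[OF Z]]
    by simp
  moreover have "k \<noteq> 4"
    using dimension_eq_UNIV[OF F dimD] dimZ proper[OF ZC] by auto
  ultimately have k: "k = 2"
    by (cases "k = 3") auto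
  obtain c where "c \<le> 4" and dimC: "D.dimension c center C"
    using subalgebra_dimension_le[OF F dimD subalgebra_C] FZ ZC by blast
  moreover have "2 dvd c"
    using dimension_dvd_of_subfield[OF F Z FZ dimZ dimC subalgebra_C[OF ZC]] k by simp
  moreover have "2 \<le> c"
    using D.independent_length_le_dimension[OF F dimC ind dC] by simp
  moreover have "c \<noteq> 4"
    using dimension_eq_UNIV[OF F dimD] dimC proper[of C] by auto
  ultimately have "c = 2"
    by presburger
  then have "D.Span center [d, 1] = C"
    using D.independent_length_eq_dimension[OF F dimC ind dC] by simp
  then show ?thesis
    using Span_linear_pair[OF F] by (simp add: C_def)
qed

lemma adjoin_center_of_noncentral:
  fixes d :: "'a::division_ring"
  assumes "has_dim_over (center :: 'a set) UNIV 4" and "d \<notin> center"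
  shows "adjoin center d = centralizer {d}"
proof
  show "adjoin center d \<subseteq> centralizer {d}"
    using adjoin_subset_double_centralizer[of center d] double_centralizer_subset[of "{d}"] by simp
  show "centralizer {d} \<subseteq> adjoin center d"
    using centralizer_of_noncentral[OF assms] linear_in_adjoin[of _ center _ d] by auto
qed

subsection \<open>Conjugating \<open>F[d]\<close> onto \<open>F'\<close>\<close>

lemma K_isomorphic_self_eq:
  assumes "K_isomorphic K K L"
  shows "L = K"
proof -
  obtain \<phi> where "bij_betw \<phi> K L" "\<forall>c\<in>K. \<phi> c = c"
    using assms unfolding K_isomorphic_def by blast
  then show ?thesis
    by (simp add: bij_betw_def)
qed

text \<open>Skolem-Noether for a quadratic element: \<open>G x = d' x - x (a - d)\<close> intertwines \<open>d\<close> and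
  \<open>d'\<close>, since \<open>a - d\<close> is the other root of \<open>X\<^sup>2 - a X - b\<close>; it vanishes at \<open>x = 1\<close> only if
  \<open>d' = a - d\<close>, and then not at any \<open>x\<close> that does not commute with \<open>d\<close>.\<close>
lemma conjugate_of_same_quadratic:
  fixes d d' :: "'a::division_ring"
  assumes "d \<notin> center" "a \<in> center" "b \<in> center"
    and d: "d * d = a * d + b" and d': "d' * d' = a * d' + b"
  obtains g where "g \<noteq> 0" "g * d * inverse g = d'"
proof -
  have a: "a * y = y * a" and b: "b * y = y * b" for y
    using assms(2,3) by (simp_all add: center_def)
  define G where "G x = d' * x - x * (a - d)" for x
  have intertwine: "d' * G x = G x * d" for x
  proof -
    have "d' * G x = (d' * d') * x - d' * x * a + d' * x * d"
      by (simp add: G_def algebra_simps)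
    also have "\<dots> = a * d' * x + b * x - d' * x * a + d' * x * d"
      by (simp add: d' algebra_simps)
    also have "\<dots> = d' * x * d - x * (a * d - (a * d + b))"
      using a[of "d' * x"] b[of x] by (simp add: algebra_simps)
    also have "\<dots> = d' * x * d - x * (a * d - d * d)"
      by (simp only: d)
    also have "\<dots> = G x * d"
      by (simp add: G_def algebra_simps)
    finally show ?thesis .
  qed
  obtain x where "d * x \<noteq> x * d"
    using assms(1) by (auto simp: center_def)
  then have "G 1 \<noteq> 0 \<or> G x \<noteq> 0"
    using a[of x] by (auto simp: G_def algebra_simps)
  then obtain g where g: "g \<noteq> 0" and "g * d = d' * g"
    using intertwine by metis
  then have "g * d * inverse g = d'"
    by (simp add: mult.assoc)
  with g show ?thesis
    using that by blast
qed

lemma conjugate_linear: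
  fixes g :: "'a::division_ring"
  assumes "a \<in> center" "b \<in> center" "g \<noteq> 0"
  shows "g * (a * d + b) * inverse g = a * (g * d * inverse g) + b"
proof -
  have "g * a = a * g" "g * b = b * g"
    using assms(1,2) by (simp_all add: center_def)
  then have "g * (a * d + b) * inverse g = a * (g * d * inverse g) + b * (g * inverse g)"
    by (simp add: distrib_left distrib_right flip: mult.assoc)
  then show ?thesis
    using assms(3) by simp
qed

lemma K_isomorphic_by_conjugation:
  fixes d :: "'a::division_ring"
  assumes "has_dim_over (center :: 'a set) UNIV 4" "d \<notin> center"
    and "K_isomorphic center (adjoin center d) F'"
  obtains g where "g \<noteq> 0" "(\<lambda>x. g * x * inverse g) ` adjoin center d = F'"
proof -
  define A where "A = adjoin center d"
  have A: "A = {a * d + b | a b. a \<in> center \<and> b \<in> center}"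
    unfolding A_def adjoin_center_of_noncentral[OF assms(1,2)]
    by (rule centralizer_of_noncentral[OF assms(1,2)])
  obtain \<phi> where bij: "bij_betw \<phi> A F'"
    and hom: "\<forall>x\<in>A. \<forall>y\<in>A. \<phi> (x + y) = \<phi> x + \<phi> y \<and> \<phi> (x * y) = \<phi> x * \<phi> y"
    and fix_center: "\<forall>c\<in>center. \<phi> c = c"
    using assms(3) unfolding K_isomorphic_def A_def by blast
  have in_A: "a * d + b \<in> A" if "a \<in> center" "b \<in> center" for a b
    using that A by blast
  have center_01: "0 \<in> center" "1 \<in> center"
    by (simp_all add: center_def)
  have d_in_A: "d \<in> A"
    using in_A[OF center_01(2,1)] by simp
  have \<phi>_linear: "\<phi> (a * d + b) = a * \<phi> d + b" if "a \<in> center" "b \<in> center" for a b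
  proof -
    have "a \<in> A" "b \<in> A" "a * d \<in> A"
      using in_A[OF center_01(1)] in_A[OF _ center_01(1)] that by simp_all
    then have "\<phi> (a * d + b) = \<phi> a * \<phi> d + \<phi> b"
      using hom d_in_A by simp
    then show ?thesis
      using fix_center that by simp
  qed
  have "d * d \<in> centralizer {d}"
    by (simp add: mult.assoc)
  then obtain a b where ab: "a \<in> center" "b \<in> center" "d * d = a * d + b"
    using centralizer_of_noncentral[OF assms(1,2)] by blast
  have "\<phi> (d * d) = \<phi> d * \<phi> d"
    using hom d_in_A by blast
  then have "\<phi> d * \<phi> d = a * \<phi> d + b"
    using ab \<phi>_linear by simp
  then obtain g where g: "g \<noteq> 0" "g * d * inverse g = \<phi> d"
    using conjugate_of_same_quadratic[OF assms(2) ab] by blast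
  have "g * x * inverse g = \<phi> x" if x: "x \<in> A" for x
  proof -
    obtain a' b' where "a' \<in> center" "b' \<in> center" "x = a' * d + b'"
      using x A by blast
    then show ?thesis
      using conjugate_linear[OF _ _ g(1)] \<phi>_linear g(2) by simp
  qed
  then have "(\<lambda>x. g * x * inverse g) ` A = \<phi> ` A"
    by (rule image_cong[OF refl])
  also have "\<dots> = F'"
    using bij by (simp add: bij_betw_def)
  finally show ?thesis
    using that g(1) unfolding A_def by blast
qed

subsection \<open>Anti-involutions\<close>

lemma anti_involution_eq_zero_iff:
  fixes \<rho> :: "'a::ring_1 \<Rightarrow> 'a"
  assumes mult: "\<And>x y. \<rho> (x * y) = \<rho> y * \<rho> x" and invol: "\<And>x. \<rho> (\<rho> x) = x"
  shows "\<rho> x = 0 \<longleftrightarrow> x = 0"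
proof -
  have "\<rho> 0 = \<rho> (0 * \<rho> 0)"
    by simp
  also have "\<dots> = 0"
    by (subst mult) (simp add: invol)
  finally show ?thesis
    using invol by metis
qed

lemma anti_involution_one:
  fixes \<rho> :: "'a::ring_1 \<Rightarrow> 'a"
  assumes mult: "\<And>x y. \<rho> (x * y) = \<rho> y * \<rho> x" and invol: "\<And>x. \<rho> (\<rho> x) = x"
  shows "\<rho> 1 = 1"
  using mult[of "\<rho> 1" 1] by (simp add: invol)

lemma anti_involution_inverse:
  fixes \<rho> :: "'a::division_ring \<Rightarrow> 'a"
  assumes mult: "\<And>x y. \<rho> (x * y) = \<rho> y * \<rho> x" and invol: "\<And>x. \<rho> (\<rho> x) = x"
  shows "\<rho> (inverse x) = inverse (\<rho> x)"
proof (cases "x = 0")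
  case True
  then show ?thesis
    using anti_involution_eq_zero_iff[OF mult invol, of 0] by simp
next
  case False
  have "\<rho> x * \<rho> (inverse x) = 1"
    using False anti_involution_one[OF mult invol] by (simp flip: mult)
  then show ?thesis
    by (rule inverse_unique[symmetric])
qed

lemma conjugation_image_rescale:
  fixes g h :: "'a::division_ring"
  assumes "is_subfield F'" "g \<noteq> 0" "h \<noteq> 0" "g * h \<in> F'"
    and conj: "(\<lambda>x. g * x * inverse g) ` A = F'"
  shows "(\<lambda>x. g * x * h) ` A = F'"
proof -
  have F': "x * y \<in> F'" "inverse x \<in> F'" if "x \<in> F'" "y \<in> F'" for x y
    using assms(1) that unfolding is_subfield_def by blast+
  have "inverse g * (g * h) = h"
    using assms(2) by (simp flip: mult.assoc)
  then have rescale: "g * x * h = (g * x * inverse g) * (g * h)" for x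
    by (simp add: mult.assoc)
  have "(\<lambda>x. g * x * h) ` A = (\<lambda>y. y * (g * h)) ` F'"
    unfolding conj[symmetric] image_image rescale ..
  also have "\<dots> = F'"
  proof
    show "(\<lambda>y. y * (g * h)) ` F' \<subseteq> F'"
      using F' assms(4) by blast
    show "F' \<subseteq> (\<lambda>y. y * (g * h)) ` F'"
    proof
      fix f assume "f \<in> F'"
      then have "f * inverse (g * h) \<in> F'" "f = f * inverse (g * h) * (g * h)"
        using F' assms(2-4) by (simp_all add: mult.assoc)
      then show "f \<in> (\<lambda>y. y * (g * h)) ` F'"
        by blast
    qed
  qed
  finally show ?thesis .
qed

lemma twisted_conjugation_image:
  fixes \<rho> :: "'a::division_ring \<Rightarrow> 'a"
  assumes mult: "\<And>x y. \<rho> (x * y) = \<rho> y * \<rho> x" and invol: "\<And>x. \<rho> (\<rho> x) = x"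
    and "is_subfield F'" "\<forall>x\<in>F'. \<rho> x = x" "\<rho> d = d" "d \<in> A" "centralizer {d} \<subseteq> A"
    and "g \<noteq> 0" and conj: "(\<lambda>x. g * x * inverse g) ` A = F'"
  shows "(\<lambda>x. g * x * \<rho> g) ` A = F'"
proof (rule conjugation_image_rescale[OF assms(3,8) _ _ conj])
  have rinv: "\<rho> (inverse g) = inverse (\<rho> g)"
    by (rule anti_involution_inverse[OF mult invol])
  show "\<rho> g \<noteq> 0"
    using assms(8) anti_involution_eq_zero_iff[OF mult invol] by simp
  have "\<rho> (g * d * inverse g) = g * d * inverse g"
    using assms(4,6) conj by blast
  then have "inverse (\<rho> g) * d * \<rho> g = g * d * inverse g"
    using rinv assms(5) by (simp add: mult mult.assoc)
  then have "\<rho> g * (inverse (\<rho> g) * d * \<rho> g) * g = \<rho> g * (g * d * inverse g) * g"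
    by simp
  moreover have "\<rho> g * (inverse (\<rho> g) * d * \<rho> g) * g = d * (\<rho> g * g)"
    using \<open>\<rho> g \<noteq> 0\<close> by (simp add: mult.assoc[symmetric])
  moreover have "\<rho> g * (g * d * inverse g) * g = (\<rho> g * g) * d"
    using assms(8) by (simp add: mult.assoc)
  ultimately have "d * (\<rho> g * g) = (\<rho> g * g) * d"
    by simp
  then have "\<rho> g * g \<in> A"
    using assms(7) by auto
  then have "g * (\<rho> g * g) * inverse g \<in> F'"
    using conj by blast
  then show "g * \<rho> g \<in> F'"
    using assms(8) by (simp add: mult.assoc)
qed

theorem lemma2p2:
  fixes \<rho> :: "'a::division_ring \<Rightarrow> 'a" and d :: 'a and F' :: "'a set"
  assumes "nonarch_local_field_odd (center :: 'a set)"
    and "has_dim_over (center :: 'a set) UNIV 4"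
    and "orthogonal_anti_involution \<rho>"
    and "d \<noteq> 0" and "\<rho> d = d"
    and "is_subfield F'" and "center \<subseteq> F'" and "\<forall>x\<in>F'. \<rho> x = x"
    and "K_isomorphic center (adjoin center d) F'"
  shows "(\<exists>g. g \<noteq> 0 \<and> (\<lambda>x. g * x * \<rho> g) ` adjoin center d = F') \<and>
         (d \<notin> center \<longrightarrow>
            (\<forall>g. g \<noteq> 0 \<and> (\<lambda>x. g * x * inverse g) ` adjoin center d = F' \<longrightarrow>
                 (\<lambda>x. g * x * \<rho> g) ` adjoin center d = F'))"
proof -
  have mult: "\<And>x y. \<rho> (x * y) = \<rho> y * \<rho> x" and invol: "\<And>x. \<rho> (\<rho> x) = x"
    using assms(3) unfolding orthogonal_anti_involution_def by blast+
  show ?thesis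
  proof (cases "d \<in> center")
    case True
    then have A: "adjoin center d = center"
      by (rule adjoin_center_of_central)
    then have "F' = center"
      using assms(9) K_isomorphic_self_eq by metis
    then have "(\<lambda>x. 1 * x * \<rho> 1) ` adjoin center d = F'"
      using A anti_involution_one[OF mult invol] by simp
    with True show ?thesis
      using one_neq_zero by blast
  next
    case False
    have A: "adjoin center d = centralizer {d}"
      by (rule adjoin_center_of_noncentral[OF assms(2) False])
    have twisted: "(\<lambda>x. g * x * \<rho> g) ` adjoin center d = F'"
      if "g \<noteq> 0" "(\<lambda>x. g * x * inverse g) ` adjoin center d = F'" for g
      by (rule twisted_conjugation_image[OF mult invol assms(6,8,5)]) (use A that in simp_all)
    obtain g where "g \<noteq> 0" "(\<lambda>x. g * x * inverse g) ` adjoin center d = F'"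
      by (rule K_isomorphic_by_conjugation[OF assms(2) False assms(9)])
    with twisted show ?thesis
      by blast
  qed
qed

end
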